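(* Let $\gamma\in\mathcal{M}_k\otimes\mathcal{M}_k$ be a nonzero state whose image is contained in the anti-symmetric subspace of $\mathbb{C}^k\otimes\mathbb{C}^k$. Then $\gamma^\Gamma\not\ge0$, $\mathcal{R}(\gamma^\Gamma)\not\ge0$, and $\mathcal{R}(\gamma)\neq\gamma$.
   Context: $\mathcal{M}_k$ denotes complex $k\times k$ matrices; $\mathcal{M}_k\otimes\mathcal{M}_k\cong\mathcal{M}_{k^2}$ via the Kronecker product. A state is a positive semidefinite Hermitian matrix (not necessarily of trace one). The anti-symmetric subspace of $\mathbb{C}^k\otimes\mathbb{C}^k$ is $\{x:F_kx=-x\}$, where $F_k(v\otimes w)=w\otimes v$. Partial transpose: $(\sum_iA_i\otimes B_i)^\Gamma=\sum_iA_i\otimes B_i^t$. Realignment on $\mathcal{M}_k\otimes\mathcal{M}_k$: identify $\mathcal{M}_k$ with $\mathbb{C}^k\otimes\mathbb{C}^k$ via $\mathrm{vec}(vw^t)=v\otimes w$ (extended linearly), and set $\mathcal{R}(A\otimes B)=\mathrm{vec}(A)\mathrm{vec}(B)^t$, extended linearly. *)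

theory Defs
  imports "HOL-Analysis.Analysis"
begin

text \<open>Matrices in M_k (x) M_k = M_{k^2} are represented as complex matrices indexed by
  pairs (i,j) of the finite type 'k, with the Kronecker convention
  (A (x) B) $ (i,j) $ (k,l) = A $ i $ k * B $ j $ l; vectors of C^k (x) C^k likewise
  satisfy (v (x) w) $ (i,j) = v $ i * w $ j.\<close>

type_synonym 'k bimat = "complex ^ ('k \<times> 'k) ^ ('k \<times> 'k)"
type_synonym 'k bivec = "complex ^ ('k \<times> 'k)"

definition hermitian_mat :: "complex ^ 'n ^ 'n \<Rightarrow> bool" where
  "hermitian_mat A \<longleftrightarrow> (\<forall>i j. A $ i $ j = cnj (A $ j $ i))"

text \<open>Positive semidefinite (a "state" in the paper's sense, trace not normalised):
  Hermitian and x^* A x is a nonnegative real for every x.\<close>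
definition psd :: "complex ^ ('n::finite) ^ 'n \<Rightarrow> bool" where
  "psd A \<longleftrightarrow> hermitian_mat A \<and>
     (\<forall>x :: complex ^ 'n. let q = (\<Sum>i\<in>UNIV. cnj (x $ i) * (A *v x) $ i)
                           in Im q = 0 \<and> Re q \<ge> 0)"

definition flip :: "('k::finite) bivec \<Rightarrow> 'k bivec" where
  "flip v = (\<chi> p. v $ (snd p, fst p))"

definition antisym_subspace :: "('k::finite) bivec set" where
  "antisym_subspace = {x. flip x = - x}"

text \<open>Partial transpose: (A (x) B)^Gamma = A (x) B^t, i.e. entry ((i,j),(k,l)) of
  gamma^Gamma is entry ((i,l),(k,j)) of gamma.\<close>
definition partial_transpose :: "('k::finite) bimat \<Rightarrow> 'k bimat" where
  "partial_transpose g = (\<chi> p q. g $ (fst p, snd q) $ (fst q, snd p))"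

text \<open>Realignment: R(A (x) B) = vec(A) vec(B)^t with vec(A) $ (i,j) = A $ i $ j, i.e.
  entry ((i,j),(k,l)) of R(gamma) is entry ((i,k),(j,l)) of gamma.\<close>
definition realign :: "('k::finite) bimat \<Rightarrow> 'k bimat" where
  "realign g = (\<chi> p q. g $ (fst p, fst q) $ (snd p, snd q))"

end

theory Submission
  imports Defs
begin

text \<open>Testing \<open>\<gamma>\<close> on basis vectors, the range condition says that \<open>\<gamma>\<close> changes sign
  when the two tensor factors of its row index are swapped; by Hermiticity the same holds for
  the column index. A nonzero state has positive trace, and each claim contradicts this by a
  trace computation: the expectation of \<open>\<gamma>\<^sup>\<Gamma>\<close> in the (unnormalised) maximally
  entangled vector \<open>\<Sum>\<^sub>i e\<^sub>i \<otimes> e\<^sub>i\<close> is \<open>-tr \<gamma>\<close>, the diagonal of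
  \<open>R(\<gamma>\<^sup>\<Gamma>)\<close> is minus that of \<open>\<gamma>\<close>, and the diagonal of \<open>R(\<gamma>)\<close> consists of
  entries \<open>\<gamma>\<close> at row index \<open>(i, i)\<close>, which vanish.\<close>

lemma sum_UNIV_pair: "(\<Sum>p\<in>UNIV. f p) = (\<Sum>i\<in>UNIV. \<Sum>j\<in>UNIV. f (i, j))"
  by (simp only: UNIV_Times_UNIV[symmetric] sum.cartesian_product) simp

lemma matrix_vector_mult_axis: "(A *v axis q 1) $ p = (A $ p $ q :: 'a::comm_semiring_1)"
  by (simp add: matrix_vector_mult_def axis_def if_distrib[of "(*) _"] cong: if_cong)

lemma sum_UNIV_two_points:
  fixes f :: "'n::finite \<Rightarrow> 'a::comm_monoid_add"
  assumes "p \<noteq> q" and "\<And>i. i \<noteq> p \<Longrightarrow> i \<noteq> q \<Longrightarrow> f i = 0"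
  shows "(\<Sum>i\<in>UNIV. f i) = f p + f q"
proof -
  have "(\<Sum>i\<in>UNIV. f i) = (\<Sum>i\<in>{p, q}. f i)"
    by (rule sum.mono_neutral_right) (use assms in auto)
  then show ?thesis
    using assms(1) by simp
qed

lemma psd_hermitian: "psd A \<Longrightarrow> A $ i $ j = cnj (A $ j $ i)"
  unfolding psd_def hermitian_mat_def by blast

lemma psd_expectation_nonneg:
  "psd A \<Longrightarrow> 0 \<le> Re (\<Sum>i\<in>UNIV. cnj (x $ i) * (A *v x) $ i)"
  unfolding psd_def Let_def by blast

lemma psd_diag_nonneg:
  assumes "psd A"
  shows "0 \<le> Re (A $ p $ p)"
proof -
  have "(\<Sum>i\<in>UNIV. cnj (axis p 1 $ i) * (A *v axis p 1) $ i) = A $ p $ p"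
    by (simp only: matrix_vector_mult_axis)
      (simp add: axis_def if_distrib[of cnj] if_distrib[of "\<lambda>c. c * _"] cong: if_cong)
  then show ?thesis
    using psd_expectation_nonneg[OF assms, of "axis p 1"] by simp
qed

lemma psd_diag_real: "psd A \<Longrightarrow> Im (A $ p $ p) = 0"
  using psd_hermitian[of A p p] by (simp add: complex_eq_iff)

lemma psd_trace_nonneg: "psd A \<Longrightarrow> 0 \<le> Re (trace A)"
  unfolding trace_def Re_sum by (simp add: sum_nonneg psd_diag_nonneg)

lemma psd_zero_diag_imp_zero_entry:
  fixes A :: "complex ^ ('n::finite) ^ 'n"
  assumes "psd A" "A $ p $ p = 0" "A $ q $ q = 0" "p \<noteq> q"
  shows "A $ p $ q = 0"
proof -
  \<comment> \<open>test vector \<open>-a e\<^sub>p + e\<^sub>q\<close>: its expectation is \<open>-2|a|\<^sup>2\<close>\<close>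
  define a where "a = A $ p $ q"
  define x :: "complex ^ 'n" where "x = (\<chi> r. if r = p then - a else if r = q then 1 else 0)"
  have Ax: "(A *v x) $ i = A $ i $ q - a * A $ i $ p" for i
    unfolding matrix_vector_mult_def
    using assms(4) by (subst sum_UNIV_two_points[OF assms(4)]) (auto simp: x_def)
  have "(\<Sum>i\<in>UNIV. cnj (x $ i) * (A *v x) $ i)
      = cnj (x $ p) * (A *v x) $ p + cnj (x $ q) * (A *v x) $ q"
    by (rule sum_UNIV_two_points[OF assms(4)]) (simp add: x_def)
  also have "\<dots> = - cnj a * a - a * cnj a"
    unfolding Ax using assms psd_hermitian[OF assms(1), of q p] by (simp add: x_def a_def)
  also have "\<dots> = - 2 * of_real ((cmod a)\<^sup>2)"
    by (simp only: complex_norm_square mult.commute[of "cnj a"]) (simp add: algebra_simps)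
  finally have "(cmod a)\<^sup>2 \<le> 0"
    using psd_expectation_nonneg[OF assms(1), of x] by simp
  then show ?thesis
    unfolding a_def by simp
qed

lemma psd_trace_pos:
  fixes A :: "complex ^ ('n::finite) ^ 'n"
  assumes "psd A" "A \<noteq> 0"
  shows "0 < Re (trace A)"
proof (rule ccontr)
  assume "\<not> 0 < Re (trace A)"
  then have "(\<Sum>p\<in>UNIV. Re (A $ p $ p)) = 0"
    using psd_trace_nonneg[OF assms(1)] unfolding trace_def Re_sum by linarith
  then have "Re (A $ p $ p) = 0" for p
    using sum_nonneg_eq_0_iff[of UNIV "\<lambda>p. Re (A $ p $ p)"] psd_diag_nonneg[OF assms(1)]
    by simp
  then have diag: "A $ p $ p = 0" for p
    using psd_diag_real[OF assms(1)] complex_eq_iff by simp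
  have "A $ p $ q = 0" for p q
    using diag psd_zero_diag_imp_zero_entry[OF assms(1)] by (cases "p = q") auto
  then have "A = 0"
    by (simp add: vec_eq_iff)
  with assms(2) show False ..
qed

lemma antisym_subspace_entry:
  assumes "x \<in> antisym_subspace"
  shows "x $ (j, i) = - x $ (i, j)"
proof -
  have "flip x $ (i, j) = (- x) $ (i, j)"
    using assms unfolding antisym_subspace_def by simp
  then show ?thesis
    unfolding flip_def by simp
qed

lemma range_antisym_imp_row_index_antisym:
  assumes "\<forall>x. A *v x \<in> antisym_subspace"
  shows "A $ (j, i) $ q = - A $ (i, j) $ q"
  using antisym_subspace_entry[OF spec[OF assms, of "axis q 1"]]
  unfolding matrix_vector_mult_axis .

lemma hermitian_row_index_antisym_imp_col_index_antisym:
  assumes "hermitian_mat A" and "\<And>i j q. A $ (j, i) $ q = - A $ (i, j) $ q"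
  shows "A $ p $ (l, k) = - A $ p $ (k, l)"
proof -
  have "A $ p $ (l, k) = cnj (A $ (l, k) $ p)"
    using assms(1) unfolding hermitian_mat_def by blast
  also have "\<dots> = - cnj (A $ (k, l) $ p)"
    by (simp add: assms(2)[of l k])
  also have "\<dots> = - A $ p $ (k, l)"
    using assms(1) unfolding hermitian_mat_def by (metis complex_cnj_cnj)
  finally show ?thesis .
qed

definition max_entangled :: "('k::finite) bivec" where
  "max_entangled = (\<chi> p. if fst p = snd p then 1 else 0)"

lemma partial_transpose_mult_max_entangled:
  "(partial_transpose A *v max_entangled) $ (i, j) = (\<Sum>k\<in>UNIV. A $ (i, k) $ (k, j))"
  unfolding matrix_vector_mult_def partial_transpose_def max_entangled_def
  by (subst sum_UNIV_pair) (simp add: if_distrib[of "(*) _"] cong: if_cong)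

lemma partial_transpose_expectation_max_entangled:
  "(\<Sum>p\<in>UNIV. cnj (max_entangled $ p) * (partial_transpose A *v max_entangled) $ p)
     = (\<Sum>i\<in>UNIV. \<Sum>k\<in>UNIV. A $ (i, k) $ (k, i))"
  by (subst sum_UNIV_pair)
    (simp only: partial_transpose_mult_max_entangled,
     simp add: max_entangled_def if_distrib[of cnj]
      if_distrib[of "\<lambda>c. c * _"] cong: if_cong)

lemma trace_realign_row_index_antisym:
  assumes "\<And>i j q. A $ (j, i) $ q = - A $ (i, j) $ q"
  shows "trace (realign A) = 0"
proof -
  have "A $ (i, i) $ q = 0" for i q
    using assms[of i i q] by simp
  then show ?thesis
    unfolding trace_def realign_def by simp
qed

lemma trace_realign_partial_transpose_col_index_antisym:
  assumes "\<And>p k l. A $ p $ (l, k) = - A $ p $ (k, l)"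
  shows "trace (realign (partial_transpose A)) = - trace A"
proof -
  have "A $ (fst p, snd p) $ (snd p, fst p) = - A $ p $ p" for p
    by (simp add: assms)
  then show ?thesis
    unfolding trace_def realign_def partial_transpose_def by (simp add: sum_negf)
qed

lemma partial_transpose_expectation_max_entangled_col_index_antisym:
  assumes "\<And>p k l. A $ p $ (l, k) = - A $ p $ (k, l)"
  shows "(\<Sum>p\<in>UNIV. cnj (max_entangled $ p) * (partial_transpose A *v max_entangled) $ p)
     = - trace A"
proof -
  have "A $ (i, k) $ (k, i) = - A $ (i, k) $ (i, k)" for i k
    by (rule assms)
  then show ?thesis
    unfolding partial_transpose_expectation_max_entangled trace_def
    by (subst sum_UNIV_pair) (simp add: sum_negf)
qed

theorem mainTheorem17:
  fixes \<gamma> :: "('k::finite) bimat"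
  assumes "psd \<gamma>"
    and "\<gamma> \<noteq> 0"
    and "\<forall>x. \<gamma> *v x \<in> antisym_subspace"
  shows "\<not> psd (partial_transpose \<gamma>) \<and> \<not> psd (realign (partial_transpose \<gamma>)) \<and> realign \<gamma> \<noteq> \<gamma>"
proof -
  have row_index: "\<And>i j q. \<gamma> $ (j, i) $ q = - \<gamma> $ (i, j) $ q"
    using assms(3) by (rule range_antisym_imp_row_index_antisym)
  have col_index: "\<And>p k l. \<gamma> $ p $ (l, k) = - \<gamma> $ p $ (k, l)"
    using assms(1) row_index unfolding psd_def
    by (blast intro: hermitian_row_index_antisym_imp_col_index_antisym)
  have pos: "0 < Re (trace \<gamma>)"
    using assms(1,2) by (rule psd_trace_pos)
  have "\<not> psd (partial_transpose \<gamma>)"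
    using psd_expectation_nonneg[of "partial_transpose \<gamma>" max_entangled] pos
    by (auto simp: partial_transpose_expectation_max_entangled_col_index_antisym[OF col_index])
  moreover have "\<not> psd (realign (partial_transpose \<gamma>))"
    using psd_trace_nonneg[of "realign (partial_transpose \<gamma>)"] pos
    by (auto simp: trace_realign_partial_transpose_col_index_antisym[OF col_index])
  moreover have "realign \<gamma> \<noteq> \<gamma>"
    using trace_realign_row_index_antisym[OF row_index] pos by auto
  ultimately show ?thesis
    by blast
qed

end
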